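(* Let $X$ be an infinite-dimensional first-countable topological vector space over $\mathbb{K}$, let $M\subset X$ and let $\alpha\ge\aleph_0$ be a cardinal. Then: (i) $M$ is $\alpha$-dense-lineable if and only if $M$ is $\alpha$-infinitely $\alpha$-dense-lineable; (ii) $M$ is pointwise $\alpha$-dense-lineable if and only if $M$ is $\alpha$-infinitely pointwise $\alpha$-dense-lineable; (iii) for every cardinal $\gamma<\alpha$, $M$ is $(\gamma,\alpha)$-dense-lineable if and only if $M$ is $\alpha$-infinitely $(\gamma,\alpha)$-dense-lineable.
   Context: $M$ is $\alpha$-dense-lineable if there is a dense linear subspace $Y$ of $X$ with $\dim(Y)=\alpha$ and $Y\subset M\cup\{0\}$; it is $\alpha$-infinitely $\alpha$-dense-lineable if there is a family $\{Y_\kappa\}_{\kappa<\alpha}$ of dense $\alpha$-dimensional subspaces of $X$ contained in $M\cup\{0\}$ with $Y_{\kappa_1}\cap Y_{\kappa_2}=\{0\}$ for $\kappa_1\ne\kappa_2$. $M$ is $\gamma$-lineable if some $\gamma$-dimensional subspace lies in $M\cup\{0\}$. $M$ is pointwise $\alpha$-dense-lineable if for each $x\in M$ there is a dense $\alpha$-dimensional subspace $Y$ with $x\in Y\subset M\cup\{0\}$; it is $\alpha$-infinitely pointwise $\alpha$-dense-lineable if for each $x\in M$ there is a family $\{Y_\kappa\}_{\kappa<\alpha}$ of dense $\alpha$-dimensional subspaces with $x\in Y_\kappa\subset M\cup\{0\}$ and $Y_{\kappa_1}\cap Y_{\kappa_2}=\mathrm{span}(x)$ for $\kappa_1\ne\kappa_2$.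 For $\gamma<\alpha$, $M$ is $(\gamma,\alpha)$-dense-lineable if $M$ is $\gamma$-lineable and every $\gamma$-dimensional subspace $W\subset M\cup\{0\}$ is contained in a dense $\alpha$-dimensional subspace $Y\subset M\cup\{0\}$; it is $\alpha$-infinitely $(\gamma,\alpha)$-dense-lineable if $M$ is $\gamma$-lineable and for every such $W$ there is a family $\{Y_\kappa\}_{\kappa<\alpha}$ of dense $\alpha$-dimensional subspaces with $W\subset Y_\kappa\subset M\cup\{0\}$ and $Y_{\kappa_1}\cap Y_{\kappa_2}=W$ for $\kappa_1\ne\kappa_2$. *)

theory Defs
  imports "HOL-Analysis.Analysis"
begin

definition tvs :: "('k::real_normed_field \<Rightarrow> 'a::{ab_group_add,topological_space} \<Rightarrow> 'a) \<Rightarrow> bool" where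
  "tvs sc \<longleftrightarrow> vector_space sc
     \<and> continuous_on UNIV (\<lambda>p::'a \<times> 'a. fst p + snd p)
     \<and> continuous_on UNIV (\<lambda>p::'k \<times> 'a. sc (fst p) (snd p))"

definition inf_dim :: "('k::field \<Rightarrow> 'a::ab_group_add \<Rightarrow> 'a) \<Rightarrow> bool" where
  "inf_dim sc \<longleftrightarrow> \<not> (\<exists>B. finite B \<and> module.span sc B = UNIV)"

definition has_dim :: "('k::field \<Rightarrow> 'a::ab_group_add \<Rightarrow> 'a) \<Rightarrow> 'a set \<Rightarrow> 'b set \<Rightarrow> bool" where
  "has_dim sc Y A \<longleftrightarrow> (\<exists>B. B \<subseteq> Y \<and> \<not> module.dependent sc B \<and> module.span sc B = Y
      \<and> (card_of B, card_of A) \<in> ordIso)"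

definition good_subspace :: "('k::field \<Rightarrow> 'a::{ab_group_add,topological_space} \<Rightarrow> 'a) \<Rightarrow> 'a set \<Rightarrow> 'b set \<Rightarrow> 'a set \<Rightarrow> bool" where
  "good_subspace sc M A Y \<longleftrightarrow> module.subspace sc Y \<and> closure Y = UNIV \<and> has_dim sc Y A
      \<and> Y \<subseteq> M \<union> {0}"

definition dense_lineable :: "('k::field \<Rightarrow> 'a::{ab_group_add,topological_space} \<Rightarrow> 'a) \<Rightarrow> 'a set \<Rightarrow> 'b set \<Rightarrow> bool" where
  "dense_lineable sc M A \<longleftrightarrow> (\<exists>Y. good_subspace sc M A Y)"

text \<open>alpha-infinitely alpha-dense-lineable; the family is indexed by A (a set of cardinality alpha).\<close>
definition inf_dense_lineable :: "('k::field \<Rightarrow> 'a::{ab_group_add,topological_space} \<Rightarrow> 'a) \<Rightarrow> 'a set \<Rightarrow> 'b set \<Rightarrow> bool" where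
  "inf_dense_lineable sc M A \<longleftrightarrow> (\<exists>Y::'b \<Rightarrow> 'a set.
      (\<forall>k\<in>A. good_subspace sc M A (Y k))
      \<and> (\<forall>k1\<in>A. \<forall>k2\<in>A. k1 \<noteq> k2 \<longrightarrow> Y k1 \<inter> Y k2 = {0}))"

definition lineable :: "('k::field \<Rightarrow> 'a::ab_group_add \<Rightarrow> 'a) \<Rightarrow> 'a set \<Rightarrow> 'c set \<Rightarrow> bool" where
  "lineable sc M C \<longleftrightarrow> (\<exists>W. module.subspace sc W \<and> has_dim sc W C \<and> W \<subseteq> M \<union> {0})"

definition pointwise_dense_lineable :: "('k::field \<Rightarrow> 'a::{ab_group_add,topological_space} \<Rightarrow> 'a) \<Rightarrow> 'a set \<Rightarrow> 'b set \<Rightarrow> bool" where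
  "pointwise_dense_lineable sc M A \<longleftrightarrow> (\<forall>x\<in>M. \<exists>Y. x \<in> Y \<and> good_subspace sc M A Y)"

definition inf_pointwise_dense_lineable :: "('k::field \<Rightarrow> 'a::{ab_group_add,topological_space} \<Rightarrow> 'a) \<Rightarrow> 'a set \<Rightarrow> 'b set \<Rightarrow> bool" where
  "inf_pointwise_dense_lineable sc M A \<longleftrightarrow> (\<forall>x\<in>M. \<exists>Y::'b \<Rightarrow> 'a set.
      (\<forall>k\<in>A. x \<in> Y k \<and> good_subspace sc M A (Y k))
      \<and> (\<forall>k1\<in>A. \<forall>k2\<in>A. k1 \<noteq> k2 \<longrightarrow> Y k1 \<inter> Y k2 = module.span sc {x}))"

text \<open>(gamma,alpha)-dense-lineable, gamma = |C|, alpha = |A| (the condition gamma < alpha is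
imposed in the theorem).\<close>
definition ga_dense_lineable :: "('k::field \<Rightarrow> 'a::{ab_group_add,topological_space} \<Rightarrow> 'a) \<Rightarrow> 'a set \<Rightarrow> 'c set \<Rightarrow> 'b set \<Rightarrow> bool" where
  "ga_dense_lineable sc M C A \<longleftrightarrow> lineable sc M C \<and>
     (\<forall>W. module.subspace sc W \<and> has_dim sc W C \<and> W \<subseteq> M \<union> {0} \<longrightarrow>
        (\<exists>Y. W \<subseteq> Y \<and> good_subspace sc M A Y))"

definition inf_ga_dense_lineable :: "('k::field \<Rightarrow> 'a::{ab_group_add,topological_space} \<Rightarrow> 'a) \<Rightarrow> 'a set \<Rightarrow> 'c set \<Rightarrow> 'b set \<Rightarrow> bool" where
  "inf_ga_dense_lineable sc M C A \<longleftrightarrow> lineable sc M C \<and>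
     (\<forall>W. module.subspace sc W \<and> has_dim sc W C \<and> W \<subseteq> M \<union> {0} \<longrightarrow>
        (\<exists>Y::'b \<Rightarrow> 'a set.
           (\<forall>k\<in>A. W \<subseteq> Y k \<and> good_subspace sc M A (Y k))
           \<and> (\<forall>k1\<in>A. \<forall>k2\<in>A. k1 \<noteq> k2 \<longrightarrow> Y k1 \<inter> Y k2 = W)))"

end

theory Submission
  imports Defs
begin

text \<open>Let Y \<subseteq> M \<union> {0} be a dense subspace of dimension \<alpha> with Hamel basis B, and let
  C \<subseteq> Y be independent with |C| < \<alpha> (C is empty, {x}, or a basis of W in the three parts).
  C lies in the span of some S \<subseteq> B with |S| < \<alpha>, so |B - S| = \<alpha> and we can choose distinct
  c(k,b,n) \<in> B - S for k \<in> A, b \<in> B, n \<in> \<nat>. First countability gives nonzero scalars t with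
  t c(k,b,n) tending to 0, so v(k,b,n) = b + t c(k,b,n) tends to b as n grows. Choosing the
  c(k,b,n) so that a rank function on B strictly increases from b to c(k,b,n) makes C together
  with all v(k,b,n) linearly independent. The spaces Z k = span (C \<union> {v(k,b,n) | b n}) then have
  dimension \<alpha>, lie in Y, are dense because their closures contain B, and pairwise intersect
  exactly in span C.\<close>

unbundle cardinal_syntax
no_notation elt_set_eq (infix \<open>=o\<close> 50)
no_notation vector_scalar_mult (infixl \<open>*s\<close> 70)

lemma tvs_vector_space: "tvs sc \<Longrightarrow> vector_space sc"
  by (simp add: tvs_def)

lemma tvs_tendsto_add:
  fixes sc :: "'k::real_normed_field \<Rightarrow> 'a::{ab_group_add,topological_space} \<Rightarrow> 'a"
    and f g :: "'x \<Rightarrow> 'a"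
  assumes "tvs sc" and "(f \<longlongrightarrow> a) F" and "(g \<longlongrightarrow> b) F"
  shows "((\<lambda>x. f x + g x) \<longlongrightarrow> a + b) F"
proof -
  have "continuous_on UNIV (\<lambda>p::'a \<times> 'a. fst p + snd p)"
    using assms(1) by (simp add: tvs_def)
  from continuous_on_tendsto_compose[OF this tendsto_Pair[OF assms(2,3)]] show ?thesis
    by simp
qed

lemma tvs_tendsto_scale:
  fixes sc :: "'k::real_normed_field \<Rightarrow> 'a::{ab_group_add,topological_space} \<Rightarrow> 'a"
  assumes "tvs sc" and "(f \<longlongrightarrow> a) F" and "(g \<longlongrightarrow> x) F"
  shows "((\<lambda>y. sc (f y) (g y)) \<longlongrightarrow> sc a x) F"
proof -
  have "continuous_on UNIV (\<lambda>p::'k \<times> 'a. sc (fst p) (snd p))"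
    using assms(1) by (simp add: tvs_def)
  from continuous_on_tendsto_compose[OF this tendsto_Pair[OF assms(2,3)]] show ?thesis
    by simp
qed

lemma tvs_subspace_closure:
  fixes sc :: "'k::real_normed_field \<Rightarrow> 'a::{ab_group_add,topological_space} \<Rightarrow> 'a"
  assumes tvs: "tvs sc" and Z: "module.subspace sc Z"
  shows "module.subspace sc (closure Z)"
proof -
  interpret vector_space sc
    using tvs by (rule tvs_vector_space)
  have add: "continuous_on UNIV (\<lambda>p::'a \<times> 'a. fst p + snd p)"
    using tvs by (simp add: tvs_def)
  have scale: "continuous_on UNIV (sc c)" for c
    unfolding continuous_on_def using tvs_tendsto_scale[OF tvs tendsto_const tendsto_ident_at] by blast
  show ?thesis
    unfolding subspace_def
  proof (intro conjI ballI allI)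
    show "0 \<in> closure Z"
      using Z closure_subset subspace_0 by blast
  next
    fix x y assume "x \<in> closure Z" and "y \<in> closure Z"
    then have "(x, y) \<in> closure (Z \<times> Z)"
      by (simp add: closure_Times)
    moreover have "(\<lambda>p. fst p + snd p) ` closure (Z \<times> Z) \<subseteq> closure Z"
      by (rule image_closure_subset)
        (use add Z closure_subset[of Z] in \<open>auto intro: continuous_on_subset subspace_add\<close>)
    ultimately show "x + y \<in> closure Z"
      by force
  next
    fix c x assume "x \<in> closure Z"
    moreover have "sc c ` closure Z \<subseteq> closure Z"
      by (rule image_closure_subset)
        (use scale Z closure_subset[of Z] in \<open>auto intro: continuous_on_subset subspace_scale\<close>)
    ultimately show "sc c x \<in> closure Z"
      by blast
  qed
qed

lemma tvs_exists_small_multiple: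
  fixes sc :: "'k::real_normed_field \<Rightarrow> 'a::{ab_group_add,topological_space} \<Rightarrow> 'a"
  assumes tvs: "tvs sc" and "open U" and "0 \<in> U"
  obtains s where "s \<noteq> 0" and "sc s x \<in> U"
proof -
  interpret vector_space sc
    using tvs by (rule tvs_vector_space)
  let ?s = "\<lambda>n. of_real (inverse (real (Suc n))) :: 'k"
  have "?s \<longlonglongrightarrow> 0"
    using tendsto_of_real[OF LIMSEQ_inverse_real_of_nat, where 'a='k] by simp
  from tvs_tendsto_scale[OF tvs this tendsto_const]
  have "(\<lambda>n. sc (?s n) x) \<longlonglongrightarrow> 0"
    by simp
  from topological_tendstoD[OF this assms(2,3)]
  obtain n where "sc (?s n) x \<in> U"
    unfolding eventually_sequentially by blast
  moreover have "?s n \<noteq> 0"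
    unfolding of_real_eq_0_iff by simp
  ultimately show thesis
    using that by blast
qed

lemma tvs_exists_scalars_tendsto_zero:
  fixes sc :: "'k::real_normed_field \<Rightarrow> 'a::{ab_group_add,first_countable_topology} \<Rightarrow> 'a"
  assumes tvs: "tvs sc"
  obtains t where "\<And>n. t n \<noteq> 0" and "(\<lambda>n. sc (t n) (x n)) \<longlonglongrightarrow> 0"
proof -
  obtain U :: "nat \<Rightarrow> 'a set" where U: "\<And>n. open (U n)" "\<And>n. 0 \<in> U n"
    and U_basis: "\<And>S. open S \<Longrightarrow> 0 \<in> S \<Longrightarrow> eventually (\<lambda>n. U n \<subseteq> S) sequentially"
    using countable_basis_at_decseq[of 0] by metis
  have "\<exists>s. s \<noteq> 0 \<and> sc s (x n) \<in> U n" for n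
    by (rule tvs_exists_small_multiple[OF tvs U(1,2)]) blast
  then obtain t where t: "\<And>n. t n \<noteq> 0 \<and> sc (t n) (x n) \<in> U n"
    by metis
  have "(\<lambda>n. sc (t n) (x n)) \<longlonglongrightarrow> 0"
  proof (rule topological_tendstoI)
    fix S :: "'a set" assume "open S" and "0 \<in> S"
    from U_basis[OF this] show "eventually (\<lambda>n. sc (t n) (x n) \<in> S) sequentially"
      by (rule eventually_mono) (use t in blast)
  qed
  with t that show thesis
    by blast
qed

lemma finite_ordLess_infinite_card_of: "finite X \<Longrightarrow> infinite A \<Longrightarrow> |X| <o |A|"
  by (rule finite_ordLess_infinite) (auto simp: Field_card_of card_of_well_order_on)

lemma card_of_Times_ordLeq_infinite_set:
  "infinite A \<Longrightarrow> |X| \<le>o |A| \<Longrightarrow> |Y| \<le>o |A| \<Longrightarrow> |X \<times> Y| \<le>o |A|"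
  by (rule card_of_Times_ordLeq_infinite_Field) (simp_all add: Field_card_of card_of_card_order_on)

lemma card_of_Un_small_ordIso:
  assumes "infinite A" and "|C| <o |A|" and "|V| =o |A|"
  shows "|C \<union> V| =o |A|"
proof -
  have V_le: "|V| \<le>o |A|" and A_le: "|A| \<le>o |V|"
    using assms(3) ordIso_iff_ordLeq by blast+
  have "|C \<union> V| \<le>o |A|"
    using assms(1) ordLess_imp_ordLeq[OF assms(2)] V_le
    by (intro card_of_Un_ordLeq_infinite_Field) (simp_all add: Field_card_of card_of_card_order_on)
  moreover have "|A| \<le>o |C \<union> V|"
    using ordLeq_transitive[OF A_le card_of_mono1[of V "C \<union> V"]] by blast
  ultimately show ?thesis
    using ordIso_iff_ordLeq by blast
qed

lemma card_of_Diff_small_ordLeq: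
  assumes "infinite A" and "|A| \<le>o |B|" and "|S| <o |A|"
  shows "|A| \<le>o |B - S|"
proof (rule ccontr)
  assume "\<not> |A| \<le>o |B - S|"
  then have "|B - S| <o |A|"
    by (simp add: not_ordLeq_iff_ordLess[OF card_of_Well_order card_of_Well_order])
  then have "|(B - S) \<union> S| <o |A|"
    using assms(1,3) by (intro card_of_Un_ordLess_infinite)
  moreover have "|B| \<le>o |(B - S) \<union> S|"
    by (rule card_of_mono1) blast
  ultimately have "|B| <o |A|"
    using ordLeq_ordLess_trans by blast
  with assms(2) show False
    by (simp add: not_ordLess_ordLeq)
qed

lemma card_of_index_set_ordLeq_Diff:
  assumes A: "infinite A" and B: "|B| =o |A|" and S: "|S| <o |A|"
  shows "|(A \<times> B \<times> (UNIV :: nat set)) \<times> (UNIV :: nat set)| \<le>o |B - S|"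
proof -
  have nat_le: "|UNIV :: nat set| \<le>o |A|"
    using A infinite_iff_card_of_nat by blast
  have B_le: "|B| \<le>o |A|" and A_le: "|A| \<le>o |B|"
    using B ordIso_iff_ordLeq by blast+
  have "|B \<times> (UNIV :: nat set)| \<le>o |A|"
    by (rule card_of_Times_ordLeq_infinite_set[OF A B_le nat_le])
  then have "|A \<times> B \<times> (UNIV :: nat set)| \<le>o |A|"
    by (rule card_of_Times_ordLeq_infinite_set[OF A ordLeq_refl[OF card_of_Card_order]])
  then have "|(A \<times> B \<times> (UNIV :: nat set)) \<times> (UNIV :: nat set)| \<le>o |A|"
    using nat_le by (rule card_of_Times_ordLeq_infinite_set[OF A])
  moreover have "|A| \<le>o |B - S|"
    using A A_le S by (rule card_of_Diff_small_ordLeq)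
  ultimately show ?thesis
    by (rule ordLeq_transitive)
qed

lemma card_of_slice_image_ordIso:
  assumes A: "infinite A" and B: "|B| =o |A|"
    and v: "inj_on v (A \<times> B \<times> (UNIV :: nat set))" and k: "k \<in> A"
  shows "|v ` ({k} \<times> B \<times> (UNIV :: nat set))| =o |A|"
proof -
  have B_le: "|B| \<le>o |A|" and A_le: "|A| \<le>o |B|"
    using B ordIso_iff_ordLeq by blast+
  have "|B \<times> (UNIV :: nat set)| \<le>o |A|"
    using A B_le infinite_iff_card_of_nat by (blast intro: card_of_Times_ordLeq_infinite_set)
  then have slice_le: "|{k} \<times> B \<times> (UNIV :: nat set)| \<le>o |A|"
    using A card_of_singl_ordLeq[of A k] by (auto intro: card_of_Times_ordLeq_infinite_set)
  have "|B| \<le>o |{k} \<times> B \<times> (UNIV :: nat set)|"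
    unfolding card_of_ordLeq[symmetric] by (rule exI[of _ "\<lambda>b. (k, b, 0)"]) (auto intro: inj_onI)
  with A_le have "|A| \<le>o |{k} \<times> B \<times> (UNIV :: nat set)|"
    by (rule ordLeq_transitive)
  with slice_le have slice: "|{k} \<times> B \<times> (UNIV :: nat set)| =o |A|"
    using ordIso_iff_ordLeq by blast
  have "inj_on v ({k} \<times> B \<times> UNIV)"
    using v by (rule inj_on_subset) (use k in blast)
  then have "|{k} \<times> B \<times> (UNIV :: nat set)| =o |v ` ({k} \<times> B \<times> UNIV)|"
    unfolding card_of_ordIso[symmetric] by (blast intro: inj_on_imp_bij_betw)
  then show ?thesis
    using slice by (rule ordIso_transitive[OF ordIso_symmetric])
qed

lemma exists_rank_increasing_injection:
  fixes g :: "'i \<times> nat \<Rightarrow> 'a" and f :: "'i \<Rightarrow> 'a"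
  assumes "inj_on g (I \<times> UNIV)"
  obtains c :: "'i \<Rightarrow> 'a" and rk :: "'a \<Rightarrow> nat"
  where "inj_on c I" and "c ` I \<subseteq> g ` (I \<times> UNIV)" and "\<And>i. i \<in> I \<Longrightarrow> rk (f i) < rk (c i)"
proof -
  define rk where
    "rk d = (if d \<in> g ` (I \<times> UNIV) then snd (inv_into (I \<times> UNIV) g d) else 0)" for d
  define c where "c i = g (i, Suc (rk (f i)))" for i
  have "rk (c i) = Suc (rk (f i))" if "i \<in> I" for i
    using assms that by (simp add: rk_def c_def)
  moreover have "inj_on c I"
    using assms by (auto simp: c_def inj_on_def)
  moreover have "c ` I \<subseteq> g ` (I \<times> UNIV)"
    by (auto simp: c_def)
  ultimately show thesis
    using that[of c rk] by auto
qed

context vector_space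
begin

lemma exists_small_spanning_subset:
  assumes "infinite A" and "|C| <o |A|" and "C \<subseteq> span B"
  obtains S where "S \<subseteq> B" and "C \<subseteq> span S" and "|S| <o |A|"
proof -
  have "\<exists>F. finite F \<and> F \<subseteq> B \<and> w \<in> span F" if "w \<in> C" for w
  proof -
    from that assms(3) obtain F r where "finite F" "F \<subseteq> B" "w = (\<Sum>a\<in>F. r a *s a)"
      unfolding span_explicit by blast
    then show ?thesis
      by (intro exI[of _ F]) (auto intro: span_sum span_scale span_base)
  qed
  then obtain F where F: "\<And>w. w \<in> C \<Longrightarrow> finite (F w) \<and> F w \<subseteq> B \<and> w \<in> span (F w)"
    by metis
  have "|\<Union>(F ` C)| <o |A|"
  proof (cases "finite C")
    case True
    then show ?thesis
      using F assms(1) by (intro finite_ordLess_infinite_card_of) auto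
  next
    case False
    have "\<forall>w\<in>C. |F w| \<le>o |C|"
      using F ordLess_imp_ordLeq[OF finite_ordLess_infinite_card_of[OF _ False]] by blast
    then have "|\<Union>(F ` C)| \<le>o |C|"
      by (rule card_of_UNION_ordLeq_infinite[OF False ordLeq_refl[OF card_of_Card_order]])
    then show ?thesis
      using assms(2) by (rule ordLeq_ordLess_trans)
  qed
  moreover have "C \<subseteq> span (\<Union>(F ` C))"
  proof
    fix w assume "w \<in> C"
    then have "w \<in> span (F w)" and "F w \<subseteq> \<Union>(F ` C)"
      using F by auto
    then show "w \<in> span (\<Union>(F ` C))"
      using span_mono by blast
  qed
  ultimately show thesis
    by (intro that[of "\<Union>(F ` C)"]) (use F in auto)
qed

lemma span_Int_independent:
  assumes "independent (P \<union> Q)"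
  shows "span P \<inter> span Q = span (P \<inter> Q)"
proof
  show "span P \<inter> span Q \<subseteq> span (P \<inter> Q)"
  proof
    fix x assume x: "x \<in> span P \<inter> span Q"
    let ?R = "representation (P \<union> Q) x"
    have "?R = representation P x" and "?R = representation Q x"
      using representation_extend[OF assms] x by auto
    then have supp: "?R b \<noteq> 0 \<Longrightarrow> b \<in> P \<inter> Q" for b
      using representation_ne_zero[of P x b] representation_ne_zero[of Q x b] by auto
    have "x \<in> span (P \<union> Q)"
      using x span_mono[of P "P \<union> Q"] by auto
    then have "x = (\<Sum>b | ?R b \<noteq> 0. ?R b *s b)"
      using sum_nonzero_representation_eq[OF assms] by simp
    also have "\<dots> \<in> span (P \<inter> Q)"
      by (intro span_sum span_scale span_base) (use supp in auto)
    finally show "x \<in> span (P \<inter> Q)" .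
  qed
  show "span (P \<inter> Q) \<subseteq> span P \<inter> span Q"
    by (simp add: span_mono)
qed

lemma span_Un_Int_span_Un:
  assumes "independent (C \<union> V \<union> V')" and "V \<inter> V' = {}"
  shows "span (C \<union> V) \<inter> span (C \<union> V') = span C"
proof -
  have "independent ((C \<union> V) \<union> (C \<union> V'))"
    using assms(1) by (simp add: Un_ac)
  then have "span (C \<union> V) \<inter> span (C \<union> V') = span ((C \<union> V) \<inter> (C \<union> V'))"
    by (rule span_Int_independent)
  also have "(C \<union> V) \<inter> (C \<union> V') = C"
    using assms(2) by blast
  finally show ?thesis .
qed

text \<open>The vector c j of maximal rank occurs in no b i and in no other c i, so it cannot be
  cancelled.\<close>

lemma perturbation_not_in_span:
  assumes E: "independent E" and "C \<subseteq> span S" and "S \<subseteq> E"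
    and b: "b ` J \<subseteq> E" and c: "c ` J \<subseteq> E - S" and "inj_on c J"
    and j: "j \<in> J" and "t j \<noteq> 0"
    and rk_b: "\<And>i. i \<in> J \<Longrightarrow> rk (b i) < rk (c i)"
    and rk_max: "\<And>i. i \<in> J \<Longrightarrow> rk (c i) \<le> (rk (c j) :: nat)"
  shows "b j + t j *s c j \<notin> span (C \<union> (\<lambda>i. b i + t i *s c i) ` (J - {j}))"
proof
  let ?E' = "E - {c j}"
  have b_E': "b i \<in> ?E'" if "i \<in> J" for i
    using b that rk_b[OF that] rk_max[OF that] by fastforce
  have c_E': "c i \<in> ?E'" if "i \<in> J - {j}" for i
    using c that j \<open>inj_on c J\<close> by (auto dest: inj_onD)
  have "C \<subseteq> span ?E'"
    using \<open>C \<subseteq> span S\<close> \<open>S \<subseteq> E\<close> c j span_mono[of S ?E'] by auto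
  moreover have "b i + t i *s c i \<in> span ?E'" if "i \<in> J - {j}" for i
    using b_E' c_E' that by (intro span_add span_scale span_base) auto
  ultimately have span_E': "span (C \<union> (\<lambda>i. b i + t i *s c i) ` (J - {j})) \<subseteq> span ?E'"
    by (intro span_minimal) auto
  assume "b j + t j *s c j \<in> span (C \<union> (\<lambda>i. b i + t i *s c i) ` (J - {j}))"
  with span_E' have "b j + t j *s c j \<in> span ?E'"
    by blast
  then have "t j *s c j \<in> span ?E'"
    using span_add_eq[OF span_base[OF b_E'[OF j]]] by blast
  then have "inverse (t j) *s t j *s c j \<in> span ?E'"
    by (rule span_scale)
  then have "c j \<in> span ?E'"
    using \<open>t j \<noteq> 0\<close> by simp
  with E c j show False
    unfolding dependent_def by blast
qed

lemma independent_perturbation_finite: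
  assumes "independent E" and "C \<subseteq> span S" and "S \<subseteq> E" and "independent C"
    and "b ` I \<subseteq> E" and "c ` I \<subseteq> E - S" and "inj_on c I"
    and "\<And>i. i \<in> I \<Longrightarrow> t i \<noteq> 0" and "\<And>i. i \<in> I \<Longrightarrow> rk (b i) < (rk (c i) :: nat)"
    and "finite J" and "J \<subseteq> I"
  shows "independent (C \<union> (\<lambda>i. b i + t i *s c i) ` J) \<and> inj_on (\<lambda>i. b i + t i *s c i) J"
  using \<open>finite J\<close> \<open>J \<subseteq> I\<close>
proof (induction J rule: finite_ranking_induct[where f = "\<lambda>i. rk (c i)"])
  case empty
  then show ?case
    using \<open>independent C\<close> by simp
next
  case (insert j J)
  let ?v = "\<lambda>i. b i + t i *s c i"
  have IH: "independent (C \<union> ?v ` J)" "inj_on ?v J"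
    using insert by auto
  show ?case
  proof (cases "j \<in> J")
    case True
    then show ?thesis
      using IH by (simp add: insert_absorb)
  next
    case False
    have "?v j \<notin> span (C \<union> ?v ` (insert j J - {j}))"
    proof (rule perturbation_not_in_span[OF assms(1-3), where rk = rk])
      show "b ` insert j J \<subseteq> E" and "c ` insert j J \<subseteq> E - S"
        using assms(5,6) insert.prems by auto
      show "inj_on c (insert j J)"
        using assms(7) insert.prems by (rule inj_on_subset)
      show "t j \<noteq> 0"
        using assms(8) insert.prems by simp
      show "rk (b i) < rk (c i)" if "i \<in> insert j J" for i
        using assms(9) insert.prems that by auto
      show "rk (c i) \<le> rk (c j)" if "i \<in> insert j J" for i
        using insert.hyps(2) that by fastforce
    qed simp
    with False have "?v j \<notin> span (C \<union> ?v ` J)"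
      by simp
    then have "independent (insert (?v j) (C \<union> ?v ` J))"
      using IH(1) by (rule independent_insertI)
    moreover have "?v j \<notin> ?v ` J"
      using \<open>?v j \<notin> span (C \<union> ?v ` J)\<close> span_superset[of "C \<union> ?v ` J"] by blast
    moreover have "C \<union> ?v ` insert j J = insert (?v j) (C \<union> ?v ` J)"
      by auto
    ultimately show ?thesis
      using IH(2) False by simp
  qed
qed

lemma independent_perturbation:
  assumes "independent E" and "C \<subseteq> span S" and "S \<subseteq> E" and "independent C"
    and "b ` I \<subseteq> E" and "c ` I \<subseteq> E - S" and "inj_on c I"
    and "\<And>i. i \<in> I \<Longrightarrow> t i \<noteq> 0" and "\<And>i. i \<in> I \<Longrightarrow> rk (b i) < (rk (c i) :: nat)"
  shows "independent (C \<union> (\<lambda>i. b i + t i *s c i) ` I) \<and> inj_on (\<lambda>i. b i + t i *s c i) I"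
proof
  let ?v = "\<lambda>i. b i + t i *s c i"
  have finite_case: "independent (C \<union> ?v ` J) \<and> inj_on ?v J" if "finite J" and "J \<subseteq> I" for J
    by (rule independent_perturbation_finite[OF assms(1-7), where t = t and rk = rk])
      (use assms(8,9) that in auto)
  show "independent (C \<union> ?v ` I)"
  proof
    assume "dependent (C \<union> ?v ` I)"
    then obtain T u where T: "finite T" "T \<subseteq> C \<union> ?v ` I"
      and u: "(\<Sum>x\<in>T. u x *s x) = 0" "\<exists>x\<in>T. u x \<noteq> 0"
      unfolding dependent_explicit by blast
    obtain J where J: "J \<subseteq> I" "finite J" "T \<inter> ?v ` I = ?v ` J"
      using finite_subset_image[of "T \<inter> ?v ` I" ?v I] T by blast
    have "dependent T"
      unfolding dependent_explicit using T u by blast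
    moreover have "T \<subseteq> C \<union> ?v ` J"
      using T J by blast
    ultimately show False
      using finite_case[OF J(2,1)] dependent_mono by blast
  qed
  show "inj_on ?v I"
  proof (rule inj_onI)
    fix i i' assume "i \<in> I" "i' \<in> I" "?v i = ?v i'"
    then show "i = i'"
      using finite_case[of "{i, i'}"] by (auto dest: inj_onD)
  qed
qed

end

lemma good_subspace_span:
  assumes "vector_space sc" and Y: "good_subspace sc M A Y"
    and X: "X \<subseteq> Y" "module.independent sc X" "|X| =o |A|"
    and Y_closure: "Y \<subseteq> closure (module.span sc X)"
  shows "good_subspace sc M A (module.span sc X)"
proof -
  interpret vector_space sc
    by fact
  have "subspace Y" and "closure Y = UNIV" and "Y \<subseteq> M \<union> {0}"
    using Y by (auto simp: good_subspace_def)
  moreover have "closure Y \<subseteq> closure (span X)"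
    using Y_closure closure_minimal by blast
  moreover have "span X \<subseteq> Y"
    using X(1) \<open>subspace Y\<close> by (rule span_minimal)
  ultimately show ?thesis
    unfolding good_subspace_def has_dim_def using X(2,3)
    by (intro conjI exI[of _ X]) (auto simp: span_superset)
qed

lemma exists_perturbed_basis:
  fixes sc :: "'k::real_normed_field \<Rightarrow> 'a::{ab_group_add,first_countable_topology} \<Rightarrow> 'a"
    and A :: "'b set"
  assumes tvs: "tvs sc" and A: "infinite A"
    and B: "module.independent sc B" "|B| =o |A|"
    and C: "module.independent sc C" "C \<subseteq> module.span sc B" "|C| <o |A|"
  obtains v :: "'b \<times> 'a \<times> nat \<Rightarrow> 'a"
  where "module.independent sc (C \<union> v ` (A \<times> B \<times> UNIV))" and "inj_on v (A \<times> B \<times> UNIV)"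
    and "v ` (A \<times> B \<times> UNIV) \<subseteq> module.span sc B"
    and "\<And>k b. (\<lambda>n. v (k, b, n)) \<longlonglongrightarrow> b"
proof -
  interpret vector_space sc
    using tvs by (rule tvs_vector_space)
  let ?I = "A \<times> B \<times> (UNIV :: nat set)"
  obtain S where S: "S \<subseteq> B" "C \<subseteq> span S" "|S| <o |A|"
    using exists_small_spanning_subset[OF A C(3,2)] .
  have "|?I \<times> (UNIV :: nat set)| \<le>o |B - S|"
    using A B(2) S(3) by (rule card_of_index_set_ordLeq_Diff)
  then obtain g :: "_ \<times> nat \<Rightarrow> 'a" where g: "inj_on g (?I \<times> UNIV)" "g ` (?I \<times> UNIV) \<subseteq> B - S"
    unfolding card_of_ordLeq[symmetric] by blast
  obtain c rk where c: "inj_on c ?I" "c ` ?I \<subseteq> g ` (?I \<times> UNIV)"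
    and rk: "\<And>i. i \<in> ?I \<Longrightarrow> rk (fst (snd i)) < (rk (c i) :: nat)"
    by (rule exists_rank_increasing_injection[OF g(1), where f = "\<lambda>i. fst (snd i)"]) blast
  have "\<exists>t. (\<forall>n. t n \<noteq> 0) \<and> (\<lambda>n. sc (t n) (c (k, b, n))) \<longlonglongrightarrow> 0" for k b
    by (rule tvs_exists_scalars_tendsto_zero[OF tvs, where x = "\<lambda>n. c (k, b, n)"]) blast
  then obtain T where T: "\<And>k b n. T k b n \<noteq> 0" "\<And>k b. (\<lambda>n. sc (T k b n) (c (k, b, n))) \<longlonglongrightarrow> 0"
    by (metis (mono_tags))
  define t where "t = (\<lambda>(k, b, n). T k b n)"
  define v where "v i = fst (snd i) + sc (t i) (c i)" for i
  have "independent (C \<union> v ` ?I) \<and> inj_on v ?I"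
    unfolding v_def
  proof (rule independent_perturbation[OF B(1) S(2,1) C(1), where rk = rk])
    show "(\<lambda>i. fst (snd i)) ` ?I \<subseteq> B" and "c ` ?I \<subseteq> B - S"
      using c(2) g(2) by auto
    show "t i \<noteq> 0" if "i \<in> ?I" for i
      using T(1) by (auto simp: t_def split: prod.splits)
  qed (use c(1) rk in auto)
  moreover have "v i \<in> span B" if "i \<in> ?I" for i
  proof -
    have "fst (snd i) \<in> B" and "c i \<in> B"
      using that c(2) g(2) by auto
    then show ?thesis
      unfolding v_def by (intro span_add span_scale span_base)
  qed
  moreover have "(\<lambda>n. v (k, b, n)) \<longlonglongrightarrow> b" for k b
    using tvs_tendsto_add[OF tvs tendsto_const T(2)] by (simp add: v_def t_def)
  ultimately show thesis
    using that by blast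
qed

lemma exists_good_subspace_family:
  fixes sc :: "'k::real_normed_field \<Rightarrow> 'a::{ab_group_add,first_countable_topology} \<Rightarrow> 'a"
    and A :: "'b set"
  assumes tvs: "tvs sc" and A: "infinite A" and Y: "good_subspace sc M A Y"
    and C: "C \<subseteq> Y" "module.independent sc C" "|C| <o |A|"
  obtains Z :: "'b \<Rightarrow> 'a set"
  where "\<And>k. k \<in> A \<Longrightarrow> module.span sc C \<subseteq> Z k \<and> good_subspace sc M A (Z k)"
    and "\<And>k k'. k \<in> A \<Longrightarrow> k' \<in> A \<Longrightarrow> k \<noteq> k' \<Longrightarrow> Z k \<inter> Z k' = module.span sc C"
proof -
  interpret vector_space sc
    using tvs by (rule tvs_vector_space)
  obtain B where B: "independent B" "span B = Y" "|B| =o |A|"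
    using Y by (auto simp: good_subspace_def has_dim_def)
  obtain v where v_indep: "independent (C \<union> v ` (A \<times> B \<times> UNIV))"
    and v_inj: "inj_on v (A \<times> B \<times> UNIV)" and v_Y: "v ` (A \<times> B \<times> UNIV) \<subseteq> Y"
    and v_lim: "\<And>k b. (\<lambda>n. v (k, b, n)) \<longlonglongrightarrow> b"
    using exists_perturbed_basis[OF tvs A B(1,3) C(2) _ C(3)] C(1) B(2) by blast
  define V where "V k = v ` ({k} \<times> B \<times> UNIV)" for k
  define Z where "Z k = span (C \<union> V k)" for k
  have V_sub: "V k \<subseteq> v ` (A \<times> B \<times> UNIV)" if "k \<in> A" for k
    using that by (auto simp: V_def)
  have good: "good_subspace sc M A (Z k)" if k: "k \<in> A" for k
    unfolding Z_def
  proof (rule good_subspace_span[OF tvs_vector_space[OF tvs] Y])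
    show "C \<union> V k \<subseteq> Y"
      using C(1) V_sub[OF k] v_Y by blast
    show "independent (C \<union> V k)"
      using v_indep by (rule independent_mono) (use V_sub[OF k] in blast)
    show "|C \<union> V k| =o |A|"
      using A C(3) card_of_slice_image_ordIso[OF A B(3) v_inj k] unfolding V_def
      by (rule card_of_Un_small_ordIso)
    have "b \<in> closure (span (C \<union> V k))" if "b \<in> B" for b
    proof (rule closed_sequentially[OF closed_closure _ v_lim])
      show "v (k, b, n) \<in> closure (span (C \<union> V k))" for n
        using that closure_subset by (fastforce simp: V_def intro: span_base)
    qed
    then show "Y \<subseteq> closure (span (C \<union> V k))"
      unfolding B(2)[symmetric] using tvs_subspace_closure[OF tvs subspace_span]
      by (intro span_minimal) auto
  qed
  have "Z k \<inter> Z k' = span C" if "k \<in> A" and "k' \<in> A" and "k \<noteq> k'" for k k'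
    unfolding Z_def
  proof (rule span_Un_Int_span_Un)
    show "independent (C \<union> V k \<union> V k')"
      using v_indep by (rule independent_mono) (use V_sub that in blast)
    have "V k \<inter> V k' = v ` (({k} \<times> B \<times> UNIV) \<inter> ({k'} \<times> B \<times> UNIV))"
      unfolding V_def using that by (intro inj_on_image_Int[symmetric, OF v_inj]) auto
    then show "V k \<inter> V k' = {}"
      using that by blast
  qed
  moreover have "span C \<subseteq> Z k" for k
    unfolding Z_def by (rule span_mono) blast
  ultimately show thesis
    using good by (intro that[of Z]) simp_all
qed

lemma dense_lineable_iff_inf_dense_lineable:
  fixes sc :: "'k::real_normed_field \<Rightarrow> 'a::{ab_group_add,first_countable_topology} \<Rightarrow> 'a"
    and A :: "'b set"
  assumes tvs: "tvs sc" and A: "infinite A"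
  shows "dense_lineable sc M A \<longleftrightarrow> inf_dense_lineable sc M A"
proof
  interpret vector_space sc
    using tvs by (rule tvs_vector_space)
  assume "dense_lineable sc M A"
  then obtain Y where Y: "good_subspace sc M A Y"
    by (auto simp: dense_lineable_def)
  have "|{} :: 'a set| <o |A|"
    using finite.emptyI A by (rule finite_ordLess_infinite_card_of)
  from exists_good_subspace_family[OF tvs A Y empty_subsetI independent_empty this]
  obtain Z :: "'b \<Rightarrow> 'a set" where
    "\<And>k. k \<in> A \<Longrightarrow> span {} \<subseteq> Z k \<and> good_subspace sc M A (Z k)"
    "\<And>k k'. k \<in> A \<Longrightarrow> k' \<in> A \<Longrightarrow> k \<noteq> k' \<Longrightarrow> Z k \<inter> Z k' = span {}"
    by blast
  then show "inf_dense_lineable sc M A"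
    unfolding inf_dense_lineable_def span_empty by (intro exI[of _ Z]) blast
next
  assume "inf_dense_lineable sc M A"
  then obtain Z :: "'b \<Rightarrow> 'a set" where "\<forall>k\<in>A. good_subspace sc M A (Z k)"
    by (auto simp: inf_dense_lineable_def)
  with infinite_imp_nonempty[OF A] show "dense_lineable sc M A"
    unfolding dense_lineable_def by blast
qed

lemma pointwise_dense_lineable_iff_inf_pointwise_dense_lineable:
  fixes sc :: "'k::real_normed_field \<Rightarrow> 'a::{ab_group_add,first_countable_topology} \<Rightarrow> 'a"
    and A :: "'b set"
  assumes tvs: "tvs sc" and A: "infinite A"
  shows "pointwise_dense_lineable sc M A \<longleftrightarrow> inf_pointwise_dense_lineable sc M A"
proof
  interpret vector_space sc
    using tvs by (rule tvs_vector_space)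
  assume pointwise: "pointwise_dense_lineable sc M A"
  show "inf_pointwise_dense_lineable sc M A"
    unfolding inf_pointwise_dense_lineable_def
  proof
    fix x assume "x \<in> M"
    with pointwise obtain Y where "x \<in> Y" and Y: "good_subspace sc M A Y"
      by (auto simp: pointwise_dense_lineable_def)
    have "independent ({x} - {0})"
      by (cases "x = 0") (simp_all add: independent_empty independent_insertI)
    moreover have "|{x} - {0}| <o |A|"
      using A by (intro finite_ordLess_infinite_card_of) auto
    ultimately obtain Z :: "'b \<Rightarrow> 'a set" where
      "\<And>k. k \<in> A \<Longrightarrow> span {x} \<subseteq> Z k \<and> good_subspace sc M A (Z k)"
      "\<And>k k'. k \<in> A \<Longrightarrow> k' \<in> A \<Longrightarrow> k \<noteq> k' \<Longrightarrow> Z k \<inter> Z k' = span {x}"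
      using exists_good_subspace_family[OF tvs A Y, of "{x} - {0}"] \<open>x \<in> Y\<close> by auto
    then show "\<exists>Z :: 'b \<Rightarrow> 'a set. (\<forall>k\<in>A. x \<in> Z k \<and> good_subspace sc M A (Z k))
        \<and> (\<forall>k\<in>A. \<forall>k'\<in>A. k \<noteq> k' \<longrightarrow> Z k \<inter> Z k' = span {x})"
      using span_base[of x "{x}"] by (intro exI[of _ Z]) blast
  qed
next
  assume inf_pointwise: "inf_pointwise_dense_lineable sc M A"
  show "pointwise_dense_lineable sc M A"
    unfolding pointwise_dense_lineable_def
  proof
    fix x assume "x \<in> M"
    with inf_pointwise obtain Z :: "'b \<Rightarrow> 'a set"
      where "\<forall>k\<in>A. x \<in> Z k \<and> good_subspace sc M A (Z k)"
      by (auto simp: inf_pointwise_dense_lineable_def)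
    with infinite_imp_nonempty[OF A] show "\<exists>Y. x \<in> Y \<and> good_subspace sc M A Y"
      by blast
  qed
qed

lemma ga_dense_lineable_iff_inf_ga_dense_lineable:
  fixes sc :: "'k::real_normed_field \<Rightarrow> 'a::{ab_group_add,first_countable_topology} \<Rightarrow> 'a"
    and A :: "'b set" and C :: "'c set"
  assumes tvs: "tvs sc" and A: "infinite A" and C: "|C| <o |A|"
  shows "ga_dense_lineable sc M C A \<longleftrightarrow> inf_ga_dense_lineable sc M C A"
proof
  interpret vector_space sc
    using tvs by (rule tvs_vector_space)
  assume ga: "ga_dense_lineable sc M C A"
  show "inf_ga_dense_lineable sc M C A"
    unfolding inf_ga_dense_lineable_def
  proof (intro conjI allI impI)
    show "lineable sc M C"
      using ga by (simp add: ga_dense_lineable_def)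
    fix W assume W: "subspace W \<and> has_dim sc W C \<and> W \<subseteq> M \<union> {0}"
    with ga obtain Y where "W \<subseteq> Y" and Y: "good_subspace sc M A Y"
      by (auto simp: ga_dense_lineable_def)
    from W obtain BW where BW: "BW \<subseteq> W" "independent BW" "span BW = W" "|BW| =o |C|"
      by (auto simp: has_dim_def)
    have "|BW| <o |A|"
      using BW(4) C by (rule ordIso_ordLess_trans)
    with exists_good_subspace_family[OF tvs A Y _ BW(2)] BW(1) \<open>W \<subseteq> Y\<close>
    obtain Z :: "'b \<Rightarrow> 'a set" where
      "\<And>k. k \<in> A \<Longrightarrow> W \<subseteq> Z k \<and> good_subspace sc M A (Z k)"
      "\<And>k k'. k \<in> A \<Longrightarrow> k' \<in> A \<Longrightarrow> k \<noteq> k' \<Longrightarrow> Z k \<inter> Z k' = W"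
      unfolding BW(3) by blast
    then show "\<exists>Z :: 'b \<Rightarrow> 'a set. (\<forall>k\<in>A. W \<subseteq> Z k \<and> good_subspace sc M A (Z k))
        \<and> (\<forall>k\<in>A. \<forall>k'\<in>A. k \<noteq> k' \<longrightarrow> Z k \<inter> Z k' = W)"
      by (intro exI[of _ Z]) blast
  qed
next
  assume inf_ga: "inf_ga_dense_lineable sc M C A"
  show "ga_dense_lineable sc M C A"
    unfolding ga_dense_lineable_def
  proof (intro conjI allI impI)
    show "lineable sc M C"
      using inf_ga by (simp add: inf_ga_dense_lineable_def)
    fix W assume "module.subspace sc W \<and> has_dim sc W C \<and> W \<subseteq> M \<union> {0}"
    with inf_ga obtain Z :: "'b \<Rightarrow> 'a set"
      where "\<forall>k\<in>A. W \<subseteq> Z k \<and> good_subspace sc M A (Z k)"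
      by (auto simp: inf_ga_dense_lineable_def)
    with infinite_imp_nonempty[OF A] show "\<exists>Y. W \<subseteq> Y \<and> good_subspace sc M A Y"
      by blast
  qed
qed

theorem corollary3p7:
  fixes sc :: "'k::real_normed_field \<Rightarrow> 'a::{ab_group_add,first_countable_topology} \<Rightarrow> 'a"
    and M :: "'a set" and A :: "'b set"
  assumes "tvs sc" and "inf_dim sc" and "infinite A"
  shows "(dense_lineable sc M A \<longleftrightarrow> inf_dense_lineable sc M A)
    \<and> (pointwise_dense_lineable sc M A \<longleftrightarrow> inf_pointwise_dense_lineable sc M A)
    \<and> (\<forall>C :: 'c set. (card_of C, card_of A) \<in> ordLess \<longrightarrow>
          (ga_dense_lineable sc M C A \<longleftrightarrow> inf_ga_dense_lineable sc M C A))"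
  by (simp add: dense_lineable_iff_inf_dense_lineable[OF assms(1,3)]
      pointwise_dense_lineable_iff_inf_pointwise_dense_lineable[OF assms(1,3)]
      ga_dense_lineable_iff_inf_ga_dense_lineable[OF assms(1,3)])

end
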